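(* Let $V$ and $W$ be oriented $d$-dimensional inner-product spaces. Then for every $A\in\mathrm{Hom}(V,W)$, \[ \mathrm{dist}^2(A,\mathrm{SO}(V,W))\le\mathrm{dist}^2(A,\mathrm{O}(V,W))+4|\det A|^{1/d}\,\mathbf{1}_{\{\det A<0\}}. \]
   Context: $\mathrm{O}(V,W)$ is the set of linear isometries $V\to W$, and $\mathrm{SO}(V,W)$ is the subset of orientation-preserving ones. $\det A$ is the determinant of the matrix of $A$ with respect to positively oriented orthonormal bases of $V$ and $W$. Distances are measured in the Frobenius (Hilbert–Schmidt) norm. $\mathbf{1}_{\{\det A<0\}}$ equals $1$ if $\det A<0$ and $0$ otherwise. *)

theory Defs
  imports "HOL-Analysis.Analysis"
begin

(* Hom(V,W) for oriented d-dimensional inner-product spaces is identified, via positively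
   oriented orthonormal bases, with d x d real matrices  real^'n^'n  (d = CARD('n)). *)

definition O_mat :: "(real^'n^'n) set" where
  "O_mat = {Q. orthogonal_matrix Q}"

definition SO_mat :: "(real^'n^'n) set" where
  "SO_mat = {Q. orthogonal_matrix Q \<and> det Q = 1}"

lemma norm_matrix_is_frobenius:
  fixes A :: "real^'n^'m"
  shows "norm A = sqrt (\<Sum>i\<in>UNIV. \<Sum>j\<in>UNIV. (A $ i $ j)^2)"
  by (simp add: norm_vec_def L2_set_def real_sqrt_pow2 sum_nonneg)

end

theory Submission
  imports Defs
begin

text \<open>Let \<open>Q\<close> be an orthogonal matrix nearest to \<open>A\<close>; if \<open>det Q = 1\<close> there is nothing to prove.
  Otherwise write \<open>A = Q B\<close> and pick a unit vector \<open>v\<close> minimising \<open>l = v \<bullet> B v\<close>. Composing \<open>Q\<close> with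
  the reflection in \<open>v\<^sup>\<bottom>\<close> gives a rotation at squared distance \<open>dist\<^sup>2(A, Q) + 4 l\<close> from \<open>A\<close>. If
  \<open>l > 0\<close>, then \<open>x \<bullet> B x \<ge> l |x|\<^sup>2\<close> for all \<open>x\<close>, and although \<open>B\<close> need not be symmetric this forces
  \<open>det B \<ge> l\<^sup>d\<close>: eliminating one pivot, the Schur complement inherits the same lower bound. Hence
  \<open>det A = - det B < 0\<close> and \<open>l \<le> |det A|\<^sup>1\<^sup>/\<^sup>d\<close>.\<close>

lemma matrix_mul_diff_distrib_left: "(A::real^'n^'m) ** (B - C) = A ** B - A ** C"
  by (simp add: matrix_matrix_mult_def vec_eq_iff sum_subtractf right_diff_distrib)

lemma matrix_mul_diff_distrib_right: "((B::real^'n^'m) - C) ** (A::real^'k^'n) = B ** A - C ** A"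
  by (simp add: matrix_matrix_mult_def vec_eq_iff sum_subtractf left_diff_distrib)

lemma inner_matrix_vector_mult_eq_sum:
  fixes M :: "real^'n^'n"
  shows "x \<bullet> (M *v y) = (\<Sum>i\<in>UNIV. \<Sum>j\<in>UNIV. x$i * M$i$j * y$j)"
  by (simp add: inner_vec_def matrix_vector_mult_def sum_distrib_left mult.assoc)

lemma norm_matrix_power2_eq_trace: "(norm (X::real^'n^'m))^2 = trace (transpose X ** X)"
proof -
  have "(norm X)^2 = (\<Sum>i\<in>UNIV. \<Sum>j\<in>UNIV. (X $ i $ j)^2)"
    unfolding norm_matrix_is_frobenius by (simp add: sum_nonneg)
  also have "\<dots> = (\<Sum>j\<in>UNIV. \<Sum>i\<in>UNIV. (X $ i $ j)^2)" by (rule sum.swap)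
  also have "\<dots> = trace (transpose X ** X)"
    by (simp add: trace_def matrix_matrix_mult_def transpose_def power2_eq_square)
  finally show ?thesis .
qed

lemma norm_orthogonal_matrix_mult_left:
  assumes "orthogonal_matrix (U::real^'m^'m)"
  shows "norm (U ** (X::real^'n^'m)) = norm X"
proof -
  have "(norm (U ** X))^2 = (norm X)^2"
    unfolding norm_matrix_power2_eq_trace matrix_transpose_mul
    using assms unfolding orthogonal_matrix_def by (metis matrix_mul_assoc matrix_mul_lid)
  then show ?thesis by (simp add: power2_eq_iff_nonneg)
qed

lemma norm_orthogonal_matrix_mult_right:
  assumes "orthogonal_matrix (U::real^'n^'n)"
  shows "norm ((X::real^'n^'m) ** U) = norm X"
proof -
  have "(norm (X ** U))^2 = trace ((transpose X ** X) ** (U ** transpose U))"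
    unfolding norm_matrix_power2_eq_trace matrix_transpose_mul
    by (metis matrix_mul_assoc trace_mul_sym)
  also have "\<dots> = (norm X)^2"
    using assms unfolding orthogonal_matrix_def norm_matrix_power2_eq_trace by simp
  finally show ?thesis by (simp add: power2_eq_iff_nonneg)
qed

lemma norm_diff_orthogonal_matrix_mult:
  assumes "orthogonal_matrix (Q::real^'n^'n)"
  shows "norm (A - Q ** R) = norm (transpose Q ** A - R)"
proof -
  have "Q ** (transpose Q ** A) = A"
    using assms unfolding orthogonal_matrix_def by (metis matrix_mul_assoc matrix_mul_lid)
  then have "A - Q ** R = Q ** (transpose Q ** A - R)"
    by (simp add: matrix_mul_diff_distrib_left)
  then show ?thesis by (simp add: norm_orthogonal_matrix_mult_left[OF assms])
qed

lemma closed_O_mat: "closed (O_mat :: (real^'n^'n) set)"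
proof -
  have "O_mat = {Q::real^'n^'n. \<forall>i j. (\<Sum>l\<in>UNIV. Q$l$i * Q$l$j) = (if i = j then 1 else 0)}"
    unfolding O_mat_def orthogonal_matrix
    by (auto simp: vec_eq_iff matrix_matrix_mult_def transpose_def mat_def)
  moreover have "closed {Q::real^'n^'n. \<forall>i j. (\<Sum>l\<in>UNIV. Q$l$i * Q$l$j) = (if i = j then 1 else 0)}"
    by (intro closed_Collect_all closed_Collect_eq continuous_intros)
  ultimately show ?thesis by simp
qed

lemma norm_orthogonal_conjugate:
  assumes "orthogonal_matrix (P::real^'n^'n)"
  shows "norm (transpose P ** X ** P) = norm X"
  using assms by (simp add: norm_orthogonal_matrix_mult_left norm_orthogonal_matrix_mult_right)

definition coordinate_reflection :: "'n \<Rightarrow> real^'n^'n" where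
  "coordinate_reflection k = (\<chi> i j. if i = j then (if i = k then -1 else 1) else 0)"

lemma orthogonal_matrix_coordinate_reflection:
  "orthogonal_matrix (coordinate_reflection (k::'n) :: real^'n^'n)"
proof -
  have "(transpose (coordinate_reflection k) ** coordinate_reflection k) $ i $ j
          = (mat 1 :: real^'n^'n) $ i $ j" for i j
    unfolding matrix_matrix_mult_def transpose_def coordinate_reflection_def mat_def
    by (cases "i = j") (auto simp: if_distrib[of "\<lambda>x. x * _"] cong: if_cong)
  then show ?thesis unfolding orthogonal_matrix by (simp add: vec_eq_iff)
qed

lemma det_coordinate_reflection: "det (coordinate_reflection (k::'n) :: real^'n^'n) = -1"
proof -
  have "det (coordinate_reflection k) = (\<Prod>i\<in>UNIV. if i = k then -1 else 1)"
    by (subst det_diagonal) (auto simp: coordinate_reflection_def intro!: prod.cong)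
  then show ?thesis by simp
qed

lemma norm_diff_coordinate_reflection:
  fixes C :: "real^'n^'n"
  shows "(norm (C - coordinate_reflection k))^2 = (norm (C - mat 1))^2 + 4 * C$k$k"
proof -
  have entry: "(C$i$j - coordinate_reflection k $i$j)^2
      = (C$i$j - (mat 1::real^'n^'n)$i$j)^2 + (if i = k then if j = k then 4 * C$k$k else 0 else 0)" for i j
    unfolding coordinate_reflection_def by (auto simp: mat_def power2_eq_square algebra_simps)
  have "(norm (C - coordinate_reflection k))^2
      = (\<Sum>i\<in>UNIV. \<Sum>j\<in>UNIV. (C$i$j - coordinate_reflection k $i$j)^2)"
    unfolding norm_matrix_is_frobenius by (simp add: sum_nonneg)
  also have "\<dots> = (\<Sum>i\<in>UNIV. \<Sum>j\<in>UNIV. (C$i$j - (mat 1::real^'n^'n)$i$j)^2) + 4 * C$k$k"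
    unfolding entry sum.distrib by (simp add: sum.If_cases)
  also have "(\<Sum>i\<in>UNIV. \<Sum>j\<in>UNIV. (C$i$j - (mat 1::real^'n^'n)$i$j)^2) = (norm (C - mat 1))^2"
    unfolding norm_matrix_is_frobenius by (simp add: sum_nonneg)
  finally show ?thesis .
qed

text \<open>\<open>R\<close> is the reflection in the hyperplane orthogonal to \<open>v\<close>.\<close>

lemma reflection_exists_norm_diff:
  fixes B :: "real^'n^'n" and v :: "real^'n"
  assumes "norm v = 1"
  obtains R where "orthogonal_matrix R" "det R = -1"
    "(norm (B - R))^2 = (norm (B - mat 1))^2 + 4 * (v \<bullet> (B *v v))"
proof -
  fix k :: 'n
  obtain P where P: "orthogonal_matrix P" and Pv: "P *v axis k 1 = v"
    using orthogonal_matrix_exists_basis[OF assms] by blast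
  define D where "D = coordinate_reflection k"
  define R where "R = P ** D ** transpose P"
  have PtP: "transpose P ** P = mat 1"
    using P unfolding orthogonal_matrix_def by auto
  have "orthogonal_matrix R"
    unfolding R_def D_def
    by (intro orthogonal_matrix_mul P orthogonal_matrix_coordinate_reflection) (simp add: P)
  moreover have "det R = -1"
  proof -
    have "det P * det P = 1"
      using PtP by (metis det_I det_mul det_transpose)
    then show ?thesis
      unfolding R_def D_def by (simp add: det_mul det_coordinate_reflection)
  qed
  moreover have "(norm (B - R))^2 = (norm (B - mat 1))^2 + 4 * (v \<bullet> (B *v v))"
  proof -
    define C where "C = transpose P ** B ** P"
    have "transpose P ** R ** P = D"
      unfolding R_def using PtP by (metis matrix_mul_assoc matrix_mul_lid matrix_mul_rid)
    then have "transpose P ** (B - R) ** P = C - D"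
      unfolding C_def by (simp add: matrix_mul_diff_distrib_left matrix_mul_diff_distrib_right)
    moreover have "transpose P ** (B - mat 1) ** P = C - mat 1"
      unfolding C_def
      by (simp add: matrix_mul_diff_distrib_left matrix_mul_diff_distrib_right PtP)
    moreover have "C$k$k = v \<bullet> (B *v v)"
    proof -
      have col: "P$i$k = v$i" for i
        using Pv unfolding matrix_vector_mult_basis by (simp add: vec_eq_iff column_def)
      have "C$k$k = (\<Sum>j\<in>UNIV. \<Sum>i\<in>UNIV. v$i * B$i$j * v$j)"
        unfolding C_def
        by (simp add: matrix_matrix_mult_def transpose_def col sum_distrib_right)
      also have "\<dots> = v \<bullet> (B *v v)"
        unfolding inner_matrix_vector_mult_eq_sum by (rule sum.swap)
      finally show ?thesis .
    qed
    ultimately show ?thesis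
      using norm_diff_coordinate_reflection[of C k] norm_orthogonal_conjugate[OF P]
      unfolding D_def by metis
  qed
  ultimately show ?thesis by (rule that)
qed

lemma det_identity_add_to_row:
  fixes x :: "real^'n"
  assumes "x $ k = 0"
  shows "det ((\<chi> r. if r = k then row k (mat 1) + x else row r (mat 1)) :: real^'n^'n) = 1"
proof -
  let ?I = "mat 1 :: real^'n^'n"
  have "x = (\<Sum>j\<in>UNIV-{k}. x $ j *s row j ?I)"
    using assms
    by (auto simp: vec_eq_iff sum_component row_def mat_def axis_def if_distrib cong: if_cong)
  also have "\<dots> \<in> vec.span {row j ?I |j. j \<noteq> k}"
    by (intro vec.span_sum vec.span_scale vec.span_base) blast
  finally have "x \<in> vec.span {row j ?I |j. j \<noteq> k}" .
  from det_row_span[OF this] show ?thesis by (simp only: det_I)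
qed

text \<open>The Schur complement of the pivot \<open>M$k$k\<close>, padded by the identity in row and column \<open>k\<close>
  so that it stays a square matrix of the same type.\<close>

definition schur_complement :: "real^'n^'n \<Rightarrow> 'n \<Rightarrow> real^'n^'n" where
  "schur_complement M k = (\<chi> i j. if i = k \<or> j = k then (if i = j then 1 else 0)
                                  else M$i$j - M$i$k * M$k$j / M$k$k)"

lemma det_eq_pivot_mult_det_schur_complement:
  fixes M :: "real^'n^'n"
  assumes "M$k$k \<noteq> 0"
  shows "det M = M$k$k * det (schur_complement M k)"
proof -
  define a where "a = M$k$k"
  define S where "S = schur_complement M k"
  define L where "L = ((\<chi> i j. (if i = j then 1 else 0)
                          - (if j = k \<and> i \<noteq> k then M$i$k / a else 0)) :: real^'n^'n)"
  define U where "U = ((\<chi> i j. (if i = j then 1 else 0)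
                          - (if i = k \<and> j \<noteq> k then M$k$j / a else 0)) :: real^'n^'n)"
  have "U = (\<chi> r. if r = k then row k (mat 1) + (\<chi> j. if j = k then 0 else - M$k$j / a)
                   else row r (mat 1))"
    unfolding U_def by (auto simp: vec_eq_iff row_def mat_def)
  then have detU: "det U = 1"
    using det_identity_add_to_row[of "\<chi> j. if j = k then 0 else - M$k$j / a" k] by simp
  have "transpose L = (\<chi> r. if r = k then row k (mat 1) + (\<chi> j. if j = k then 0 else - M$j$k / a)
                           else row r (mat 1))"
    unfolding L_def by (auto simp: vec_eq_iff row_def mat_def transpose_def)
  then have "det (transpose L) = 1"
    using det_identity_add_to_row[of "\<chi> j. if j = k then 0 else - M$j$k / a" k] by simp
  then have detL: "det L = 1" by simp
  have LM: "(L ** M) $ i $ j = M$i$j - (if i \<noteq> k then M$i$k / a * M$k$j else 0)" for i j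
  proof -
    have "(L ** M) $ i $ j = (\<Sum>l\<in>UNIV. (if i = l then M$l$j else 0)
                                     - (if l = k \<and> i \<noteq> k then M$i$k / a * M$l$j else 0))"
      unfolding L_def matrix_matrix_mult_def by (auto intro!: sum.cong simp: left_diff_distrib)
    then show ?thesis by (simp add: sum_subtractf)
  qed
  have LMU: "(L ** M ** U) $ i $ j
      = (L ** M)$i$j - (if j \<noteq> k then (L ** M)$i$k * (M$k$j / a) else 0)" for i j
  proof -
    have "(L ** M ** U) $ i $ j = (\<Sum>l\<in>UNIV. (if l = j then (L ** M)$i$l else 0)
                             - (if l = k \<and> j \<noteq> k then (L ** M)$i$l * (M$k$j / a) else 0))"
      unfolding U_def matrix_matrix_mult_def by (auto intro!: sum.cong simp: right_diff_distrib)
    then show ?thesis by (simp add: sum_subtractf)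
  qed
  have elim: "L ** M ** U = (\<chi> i. if i = k then a *s row k S else row i S)"
  proof -
    have "a \<noteq> 0" using assms unfolding a_def .
    then have "(L ** M ** U) $ i $ j = (\<chi> i. if i = k then a *s row k S else row i S) $ i $ j" for i j
      unfolding LMU LM
      by (cases "i = k"; cases "j = k") (auto simp: row_def S_def schur_complement_def a_def field_simps)
    then show ?thesis by (simp add: vec_eq_iff)
  qed
  have "det M = det (L ** M ** U)"
    by (simp add: det_mul detL detU)
  also have "\<dots> = a * det (\<chi> i. if i = k then row k S else row i S)"
    unfolding elim by (rule det_row_mul)
  also have "(\<chi> i. if i = k then row k S else row i S) = S"
    by (auto simp: vec_eq_iff row_def)
  finally show ?thesis unfolding a_def S_def .
qed

text \<open>Minimising the quadratic form over the line \<open>y + s e\<^sub>k\<close> yields (at most) the quadratic form of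
  the Schur complement.\<close>

lemma quadratic_form_schur_complement:
  fixes M :: "real^'n^'n"
  assumes pos: "M$k$k > 0" and yk: "y$k = 0"
  obtains s where "(y + s *\<^sub>R axis k 1) \<bullet> (M *v (y + s *\<^sub>R axis k 1))
                     \<le> y \<bullet> (schur_complement M k *v y)"
proof -
  define a where "a = M$k$k"
  define p where "p = (\<Sum>j\<in>UNIV. M$k$j * y$j)"
  define q where "q = (\<Sum>i\<in>UNIV. y$i * M$i$k)"
  define s where "s = - (p + q) / (2 * a)"
  have schur: "y \<bullet> (schur_complement M k *v y) = y \<bullet> (M *v y) - q * p / a"
  proof -
    have "y \<bullet> (schur_complement M k *v y)
        = (\<Sum>i\<in>UNIV. \<Sum>j\<in>UNIV. y$i * M$i$j * y$j - (y$i * M$i$k) * (M$k$j * y$j) / a)"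
      unfolding inner_matrix_vector_mult_eq_sum schur_complement_def a_def using yk
      by (intro sum.cong refl) (auto simp: algebra_simps)
    also have "\<dots> = y \<bullet> (M *v y) - q * p / a"
      unfolding inner_matrix_vector_mult_eq_sum p_def q_def
      by (simp add: sum_subtractf sum_divide_distrib sum_distrib_left sum_distrib_right, rule sum.swap)
    finally show ?thesis .
  qed
  have line: "(y + s *\<^sub>R axis k 1) \<bullet> (M *v (y + s *\<^sub>R axis k 1))
      = y \<bullet> (M *v y) + s * (p + q) + s^2 * a"
  proof -
    have "y \<bullet> (M *v axis k 1) = q"
      unfolding matrix_vector_mult_basis q_def by (simp add: inner_vec_def column_def)
    moreover have "axis k 1 \<bullet> (M *v y) = p"
      unfolding p_def by (simp add: inner_axis' matrix_vector_mult_def)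
    moreover have "axis k 1 \<bullet> (M *v axis k 1) = a"
      unfolding a_def matrix_vector_mult_basis by (simp add: inner_axis' column_def)
    ultimately show ?thesis
      by (simp add: matrix_vector_right_distrib matrix_vector_mult_scaleR inner_add_left
          inner_add_right power2_eq_square algebra_simps)
  qed
  have "s * (p + q) + s^2 * a = - ((p + q)^2 / (4 * a))"
    unfolding s_def a_def using pos by (simp add: field_simps power2_eq_square)
  also have "\<dots> \<le> - (q * p / a)"
    using pos sum_squares_ge_zero[of "p - q" 0]
    by (simp add: a_def field_simps power2_eq_square)
  finally show ?thesis
    using that[of s] unfolding line schur by simp
qed

lemma det_ge_power_card_support:
  fixes M :: "real^'n^'n"
  assumes "finite S" and l: "l > 0"
    and "\<And>i j. i \<notin> S \<or> j \<notin> S \<Longrightarrow> M$i$j = (if i = j then 1 else 0)"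
    and "\<And>x. (\<And>i. i \<notin> S \<Longrightarrow> x$i = 0) \<Longrightarrow> l * (x \<bullet> x) \<le> x \<bullet> (M *v x)"
  shows "l ^ card S \<le> det M"
  using assms(1,3,4)
proof (induction S arbitrary: M rule: finite_induct)
  case empty
  then have "M = mat 1" by (simp add: vec_eq_iff mat_def)
  then show ?case by simp
next
  case (insert k T)
  have "l * (axis k (1::real) \<bullet> axis k 1) \<le> axis k 1 \<bullet> (M *v axis k 1)"
    using insert.prems(2)[of "axis k 1"] by (simp add: axis_def)
  then have pivot: "l \<le> M$k$k"
    unfolding matrix_vector_mult_basis by (simp add: inner_axis' column_def)
  have "l ^ card T \<le> det (schur_complement M k)"
  proof (rule insert.IH)
    show "schur_complement M k $ i $ j = (if i = j then 1 else 0)" if "i \<notin> T \<or> j \<notin> T" for i j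
      using that insert.prems(1)[of i j] insert.prems(1)[of i k] insert.prems(1)[of k j]
      by (auto simp: schur_complement_def)
    show "l * (y \<bullet> y) \<le> y \<bullet> (schur_complement M k *v y)" if "\<And>i. i \<notin> T \<Longrightarrow> y$i = 0" for y
    proof -
      have yk: "y$k = 0" using that insert.hyps(2) by blast
      obtain s where s: "(y + s *\<^sub>R axis k 1) \<bullet> (M *v (y + s *\<^sub>R axis k 1))
                          \<le> y \<bullet> (schur_complement M k *v y)"
        using quadratic_form_schur_complement[of M k y] pivot l yk by force
      have "l * (y \<bullet> y) \<le> l * ((y + s *\<^sub>R axis k 1) \<bullet> (y + s *\<^sub>R axis k 1))"
        using l yk by (simp add: inner_add_left inner_add_right inner_axis inner_axis')
      also have "\<dots> \<le> (y + s *\<^sub>R axis k 1) \<bullet> (M *v (y + s *\<^sub>R axis k 1))"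
        using insert.prems(2)[of "y + s *\<^sub>R axis k 1"] that by (simp add: axis_def)
      finally show ?thesis using s by linarith
    qed
  qed
  then have "l * l ^ card T \<le> M$k$k * det (schur_complement M k)"
    using pivot l by (intro mult_mono) auto
  then show ?case
    using det_eq_pivot_mult_det_schur_complement[of M k] pivot l insert.hyps by simp
qed

lemma det_ge_power_of_coercive:
  fixes M :: "real^'n^'n"
  assumes "l > 0" and "\<And>x. l * (x \<bullet> x) \<le> x \<bullet> (M *v x)"
  shows "l ^ CARD('n) \<le> det M"
  using det_ge_power_card_support[of UNIV l M] assms by simp

lemma quadratic_form_attains_min_on_sphere:
  fixes B :: "real^'n^'n"
  obtains v where "norm v = 1" "\<And>x. (v \<bullet> (B *v v)) * (x \<bullet> x) \<le> x \<bullet> (B *v x)"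
proof -
  have "continuous_on (sphere 0 1) (\<lambda>x::real^'n. x \<bullet> (B *v x))"
    by (intro continuous_intros linear_continuous_on matrix_vector_mul_linear)
  moreover have "sphere (0::real^'n) 1 \<noteq> {}" by simp
  ultimately obtain v where v: "v \<in> sphere (0::real^'n) 1"
    and min: "\<And>x. x \<in> sphere 0 1 \<Longrightarrow> v \<bullet> (B *v v) \<le> x \<bullet> (B *v x)"
    using continuous_attains_inf[OF compact_sphere] by blast
  have "(v \<bullet> (B *v v)) * (x \<bullet> x) \<le> x \<bullet> (B *v x)" for x
  proof (cases "x = 0")
    case False
    define u where "u = x /\<^sub>R norm x"
    have "u \<in> sphere 0 1" using False unfolding u_def by simp
    then have "(v \<bullet> (B *v v)) * (norm x)^2 \<le> (u \<bullet> (B *v u)) * (norm x)^2"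
      using min by (simp add: mult_right_mono)
    moreover have "x = norm x *\<^sub>R u" using False unfolding u_def by simp
    then have "x \<bullet> (B *v x) = (u \<bullet> (B *v u)) * (norm x)^2"
      by (metis inner_scaleR_left inner_scaleR_right matrix_vector_mult_scaleR mult.assoc
          mult.commute power2_eq_square)
    ultimately show ?thesis by (simp add: power2_norm_eq_inner)
  qed simp
  then show ?thesis using v that by simp
qed

lemma coercivity_constant_le_root_det:
  fixes M :: "real^'n^'n"
  assumes l: "l > 0" and "\<And>x. l * (x \<bullet> x) \<le> x \<bullet> (M *v x)"
  shows "0 < det M" and "l \<le> det M powr (1 / real CARD('n))"
proof -
  have le: "l ^ CARD('n) \<le> det M"
    using det_ge_power_of_coercive assms by blast
  then show "0 < det M"
    using l by (meson less_le_trans zero_less_power)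
  have "l = (l ^ CARD('n)) powr (1 / real CARD('n))"
    using l by (simp add: powr_realpow[symmetric] powr_powr)
  also have "\<dots> \<le> det M powr (1 / real CARD('n))"
    using le l by (intro powr_mono2) auto
  finally show "l \<le> det M powr (1 / real CARD('n))" .
qed

lemma infdist_O_mat_attained:
  obtains Q :: "real^'n^'n" where "orthogonal_matrix Q" "infdist A O_mat = dist A Q"
proof -
  have "O_mat \<noteq> {}" unfolding O_mat_def using orthogonal_matrix_id by blast
  then show ?thesis
    using infdist_attains_inf[OF closed_O_mat] that unfolding O_mat_def by blast
qed

theorem lemmaA5:
  fixes A :: "real^'n^'n"
  shows "(infdist A SO_mat)^2 \<le> (infdist A O_mat)^2
           + 4 * \<bar>det A\<bar> powr (1 / real CARD('n)) * (if det A < 0 then 1 else 0)"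
proof -
  obtain Q where Q: "orthogonal_matrix Q" and dQ: "infdist A O_mat = dist A Q"
    using infdist_O_mat_attained by blast
  have SO_le: "(infdist A SO_mat)^2 \<le> (dist A Y)^2" if "Y \<in> SO_mat" for Y
    using infdist_le[OF that, of A] infdist_nonneg by (intro power_mono) auto
  consider "det Q = 1" | "det Q = -1" using det_orthogonal_matrix[OF Q] by blast
  then show ?thesis
  proof cases
    case 1
    then have "(infdist A SO_mat)^2 \<le> (infdist A O_mat)^2"
      using SO_le[of Q] Q dQ unfolding SO_mat_def by simp
    then show ?thesis by (simp add: add_increasing2)
  next
    case 2
    define B where "B = transpose Q ** A"
    obtain v where "norm v = 1" and coercive: "\<And>x. (v \<bullet> (B *v v)) * (x \<bullet> x) \<le> x \<bullet> (B *v x)"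
      using quadratic_form_attains_min_on_sphere by blast
    then obtain R where R: "orthogonal_matrix R" "det R = -1"
      and dR: "(norm (B - R))^2 = (norm (B - mat 1))^2 + 4 * (v \<bullet> (B *v v))"
      using reflection_exists_norm_diff by blast
    have "Q ** R \<in> SO_mat"
      using Q R 2 unfolding SO_mat_def by (simp add: orthogonal_matrix_mul det_mul)
    moreover have "(dist A (Q ** R))^2 = (infdist A O_mat)^2 + 4 * (v \<bullet> (B *v v))"
      using norm_diff_orthogonal_matrix_mult[OF Q, of A R]
        norm_diff_orthogonal_matrix_mult[OF Q, of A "mat 1"] dQ dR
      by (simp add: dist_norm B_def)
    moreover have "v \<bullet> (B *v v) \<le> \<bar>det A\<bar> powr (1 / real CARD('n)) * (if det A < 0 then 1 else 0)"
    proof (cases "v \<bullet> (B *v v) > 0")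
      case True
      have "det B = - det A" unfolding B_def using 2 by (simp add: det_mul)
      then show ?thesis
        using coercivity_constant_le_root_det[OF True coercive] by simp
    next
      case False
      then show ?thesis by (simp add: order_trans[of _ 0])
    qed
    ultimately show ?thesis using SO_le by fastforce
  qed
qed

end
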